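(* Let $G$ and $H$ be graphs, each with at least $2$ vertices. The strong product $G\boxtimes H$ is $1$-perfectly orientable if and only if one of the following holds: (i) every connected component of $G$ is complete and $H$ is $1$-perfectly orientable, or vice versa; (ii) every connected component of $G$ is $2$-complete and every connected component of $H$ is a co-chain graph, or vice versa.
   Context: All graphs are finite and simple. An orientation of a graph $G$ is $1$-perfect if the out-neighborhood of every vertex induces a clique in $G$; $G$ is $1$-perfectly orientable if it admits a $1$-perfect orientation. The strong product $G\boxtimes H$ has vertex set $V(G)\times V(H)$, with distinct $(u,v),(u',v')$ adjacent iff $u'\in N_G[u]$ and $v'\in N_H[v]$ (closed neighborhoods). A graph is $2$-complete if it is the union of two (not necessarily distinct) complete graphs sharing at least one vertex (equivalently, it is obtained from $K_1$ or $P_3$ by repeatedly adding true twins, where adding a true twin to $x$ means adding a new vertex adjacent to $x$ and to all neighbors of $x$). A graph $G$ is a co-chain graph if its vertex set can be partitioned into two cliques $X$ and $Y$ such that the vertices of $X$ can be ordered $x_1,\dots,x_{|X|}$ with $N[x_i]\subseteq N[x_j]$ for all $1\le i<j\le |X|$. *)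

theory Defs
  imports Main
begin

definition graph :: "'a set \<Rightarrow> ('a \<times> 'a) set \<Rightarrow> bool" where
  "graph V E \<longleftrightarrow> finite V \<and> E \<subseteq> V \<times> V \<and> sym E \<and> (\<forall>x. (x, x) \<notin> E)"

definition clique :: "('a \<times> 'a) set \<Rightarrow> 'a set \<Rightarrow> bool" where
  "clique E K \<longleftrightarrow> (\<forall>x\<in>K. \<forall>y\<in>K. x \<noteq> y \<longrightarrow> (x, y) \<in> E)"

definition complete_graph :: "'a set \<Rightarrow> ('a \<times> 'a) set \<Rightarrow> bool" where
  "complete_graph V E \<longleftrightarrow> clique E V"

definition orientation :: "('a \<times> 'a) set \<Rightarrow> ('a \<times> 'a) set \<Rightarrow> bool" where
  "orientation E D \<longleftrightarrow> D \<subseteq> E \<and> (\<forall>u v. (u, v) \<in> E \<longrightarrow> (u, v) \<in> D \<or> (v, u) \<in> D)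
      \<and> (\<forall>u v. (u, v) \<in> D \<longrightarrow> (v, u) \<notin> D)"

definition one_perfect_orientation :: "'a set \<Rightarrow> ('a \<times> 'a) set \<Rightarrow> ('a \<times> 'a) set \<Rightarrow> bool" where
  "one_perfect_orientation V E D \<longleftrightarrow> orientation E D \<and> (\<forall>v\<in>V. clique E {w. (v, w) \<in> D})"

definition one_perfectly_orientable :: "'a set \<Rightarrow> ('a \<times> 'a) set \<Rightarrow> bool" where
  "one_perfectly_orientable V E \<longleftrightarrow> (\<exists>D. one_perfect_orientation V E D)"

definition strong_product_edges ::
  "'a set \<Rightarrow> ('a \<times> 'a) set \<Rightarrow> 'b set \<Rightarrow> ('b \<times> 'b) set \<Rightarrow> (('a \<times> 'b) \<times> ('a \<times> 'b)) set" where
  "strong_product_edges V1 E1 V2 E2 =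
     {((u, v), (u', v')). u \<in> V1 \<and> u' \<in> V1 \<and> v \<in> V2 \<and> v' \<in> V2 \<and> (u, v) \<noteq> (u', v')
        \<and> (u' = u \<or> (u, u') \<in> E1) \<and> (v' = v \<or> (v, v') \<in> E2)}"

definition induced_edges :: "('a \<times> 'a) set \<Rightarrow> 'a set \<Rightarrow> ('a \<times> 'a) set" where
  "induced_edges E C = E \<inter> (C \<times> C)"

definition components :: "'a set \<Rightarrow> ('a \<times> 'a) set \<Rightarrow> 'a set set" where
  "components V E = {{y \<in> V. (x, y) \<in> E\<^sup>*} | x. x \<in> V}"

definition two_complete :: "'a set \<Rightarrow> ('a \<times> 'a) set \<Rightarrow> bool" where
  "two_complete V E \<longleftrightarrow> (\<exists>A B. A \<union> B = V \<and> A \<inter> B \<noteq> {} \<and>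
      (\<forall>x y. (x, y) \<in> E \<longleftrightarrow> x \<noteq> y \<and> ((x \<in> A \<and> y \<in> A) \<or> (x \<in> B \<and> y \<in> B))))"

definition closed_nbhd :: "('a \<times> 'a) set \<Rightarrow> 'a \<Rightarrow> 'a set" where
  "closed_nbhd E x = insert x {y. (x, y) \<in> E}"

definition co_chain :: "'a set \<Rightarrow> ('a \<times> 'a) set \<Rightarrow> bool" where
  "co_chain V E \<longleftrightarrow> (\<exists>X Y xs. X \<union> Y = V \<and> X \<inter> Y = {} \<and> clique E X \<and> clique E Y \<and>
      distinct xs \<and> set xs = X \<and>
      (\<forall>i j. i < j \<and> j < length xs \<longrightarrow> closed_nbhd E (xs ! i) \<subseteq> closed_nbhd E (xs ! j)))"

end

theory Submission
  imports Defs
begin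

text \<open>A graph is 1-perfectly orientable iff one can choose for every vertex a clique through it
  such that every edge lies in the clique chosen at one of its ends. For a complete component times
  a 1-perfectly orientable graph, take closed neighbourhood times closed out-neighbourhood. A
  2-complete graph times a co-chain graph is treated component by component, mixing three
  1-perfect orientations of the co-chain graph according to the clique of the first factor.

  Conversely, every layer of a 1-perfectly oriented product is 1-perfectly oriented, so both
  factors are 1-perfectly orientable. If \<open>H\<close> contains an induced path \<open>i j k\<close>, the vertices of
  \<open>G\<close> whose copy in layer \<open>j\<close> has an arc into layer \<open>i\<close>, respectively \<open>k\<close>, form two disjoint
  sets, outside each of which closed neighbourhoods are cliques and induced paths on four vertices
  cannot end; this forces every component of \<open>G\<close> to be a co-chain graph. A co-chain component that
  is not 2-complete contains an induced \<open>P\<^sub>4\<close>, and \<open>P\<^sub>4 \<boxtimes> P\<^sub>4\<close> has no 1-perfect orientation since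
  forced arcs travel around both paths and reverse themselves. So if neither factor has only
  complete components, both have only co-chain components, and one of them only 2-complete ones.\<close>

lemma graphD:
  assumes "graph V E"
  shows "finite V" "E \<subseteq> V \<times> V" "sym E" "(x, x) \<notin> E"
    "(x, y) \<in> E \<Longrightarrow> (y, x) \<in> E" "(x, y) \<in> E \<Longrightarrow> x \<in> V" "(x, y) \<in> E \<Longrightarrow> y \<in> V"
  using assms unfolding graph_def by (auto dest: symD)

lemma graph_induced: "graph V E \<Longrightarrow> C \<subseteq> V \<Longrightarrow> graph C (induced_edges E C)"
  unfolding graph_def induced_edges_def sym_def by (auto intro: finite_subset)

lemma closed_nbhd_iff: "y \<in> closed_nbhd E x \<longleftrightarrow> y = x \<or> (x, y) \<in> E"
  by (auto simp: closed_nbhd_def)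

lemma closed_nbhd_sym: "graph V E \<Longrightarrow> y \<in> closed_nbhd E x \<longleftrightarrow> x \<in> closed_nbhd E y"
  by (auto simp: closed_nbhd_iff dest: graphD(5))

lemma closed_nbhd_subset: "graph V E \<Longrightarrow> x \<in> V \<Longrightarrow> closed_nbhd E x \<subseteq> V"
  by (auto simp: closed_nbhd_iff dest: graphD(7))

lemma cliqueD: "clique E K \<Longrightarrow> x \<in> K \<Longrightarrow> y \<in> K \<Longrightarrow> x \<noteq> y \<Longrightarrow> (x, y) \<in> E"
  by (simp add: clique_def)

lemma clique_subset: "clique E K \<Longrightarrow> K' \<subseteq> K \<Longrightarrow> clique E K'"
  by (auto simp: clique_def)

lemma clique_Un:
  "clique E K \<Longrightarrow> clique E K' \<Longrightarrow> (\<And>x y. x \<in> K \<Longrightarrow> y \<in> K' \<Longrightarrow> x \<noteq> y \<Longrightarrow> (x, y) \<in> E)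
    \<Longrightarrow> sym E \<Longrightarrow> clique E (K \<union> K')"
  unfolding clique_def by (metis UnE symD)

definition induced_P3 :: "('a \<times> 'a) set \<Rightarrow> 'a \<Rightarrow> 'a \<Rightarrow> 'a \<Rightarrow> bool" where
  "induced_P3 E x y z \<longleftrightarrow> (x, y) \<in> E \<and> (y, z) \<in> E \<and> x \<noteq> z \<and> (x, z) \<notin> E"

definition induced_P4 :: "('a \<times> 'a) set \<Rightarrow> 'a \<Rightarrow> 'a \<Rightarrow> 'a \<Rightarrow> 'a \<Rightarrow> bool" where
  "induced_P4 E a b c d \<longleftrightarrow> (a, b) \<in> E \<and> (b, c) \<in> E \<and> (c, d) \<in> E
     \<and> a \<noteq> c \<and> b \<noteq> d \<and> a \<noteq> d \<and> (a, c) \<notin> E \<and> (b, d) \<notin> E \<and> (a, d) \<notin> E"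

lemma induced_P4_induced_edges:
  "induced_P4 (induced_edges E C) a b c d \<Longrightarrow> induced_P4 E a b c d"
  by (auto simp: induced_P4_def induced_edges_def)

section \<open>Connected components\<close>

definition component :: "'a set \<Rightarrow> ('a \<times> 'a) set \<Rightarrow> 'a \<Rightarrow> 'a set" where
  "component V E x = {y \<in> V. (x, y) \<in> E\<^sup>*}"

lemma components_eq: "components V E = component V E ` V"
  by (auto simp: components_def component_def)

lemma component_in_components: "x \<in> V \<Longrightarrow> component V E x \<in> components V E"
  by (simp add: components_eq)

lemma component_subset: "C \<in> components V E \<Longrightarrow> C \<subseteq> V"
  by (auto simp: components_def)

lemma component_self: "x \<in> V \<Longrightarrow> x \<in> component V E x"
  by (simp add: component_def)

lemma component_eq:
  assumes "graph V E" "(x, y) \<in> E\<^sup>*"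
  shows "component V E y = component V E x"
  using assms sym_rtrancl[OF graphD(3)[OF assms(1)]]
  by (auto simp: component_def intro: rtrancl_trans dest: symD)

lemma components_disjoint: "graph V E \<Longrightarrow> pairwise disjnt (components V E)"
  unfolding pairwise_def disjnt_def components_eq component_def
  by (auto dest: component_eq[unfolded component_def])

lemma component_reachable:
  assumes "graph V E" "C \<in> components V E" "x \<in> C" "y \<in> C"
  shows "(x, y) \<in> E\<^sup>*"
  using assms sym_rtrancl[OF graphD(3)[OF assms(1)]]
  by (auto simp: components_eq component_def intro: rtrancl_trans dest: symD)

lemma component_closed:
  assumes "graph V E" "C \<in> components V E" "x \<in> C" "(x, y) \<in> E\<^sup>*"
  shows "y \<in> C"
proof -
  obtain x0 where C: "C = component V E x0"
    using assms(2) by (auto simp: components_eq)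
  have "y \<in> V"
    using assms(4,3) C
    by (induction rule: rtrancl_induct) (auto simp: component_def dest: graphD(7)[OF assms(1)])
  then show ?thesis
    using assms(3,4) C by (auto simp: component_def intro: rtrancl_trans)
qed

lemma closed_nbhd_induced_component:
  assumes "graph V E" "C \<in> components V E" "x \<in> C"
  shows "closed_nbhd (induced_edges E C) x = closed_nbhd E x"
  using assms component_closed[OF assms r_into_rtrancl] by (auto simp: closed_nbhd_iff induced_edges_def)

lemma component_connected:
  assumes G: "graph V E" and C: "C \<in> components V E" and "x \<in> C" "y \<in> C"
  shows "(x, y) \<in> (induced_edges E C)\<^sup>*"
proof -
  obtain x0 where x0: "x0 \<in> V" "C = component V E x0"
    using C by (auto simp: components_eq)
  have from_x0: "(x0, z) \<in> (induced_edges E C)\<^sup>*" if "(x0, z) \<in> E\<^sup>*" for z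
    using that
  proof (induction rule: rtrancl_induct)
    case (step y z)
    then have "y \<in> C" "z \<in> C"
      using x0 graphD(6,7)[OF G step(2)] by (auto simp: component_def intro: rtrancl_into_rtrancl)
    then show ?case
      using step by (auto simp: induced_edges_def intro: rtrancl_into_rtrancl)
  qed simp
  have "(x0, x) \<in> (induced_edges E C)\<^sup>*" "(x0, y) \<in> (induced_edges E C)\<^sup>*"
    using from_x0 assms(3,4) x0(2) by (auto simp: component_def)
  moreover have "sym ((induced_edges E C)\<^sup>*)"
    using graph_induced[OF G component_subset[OF C]] unfolding graph_def by (blast intro: sym_rtrancl)
  ultimately show ?thesis
    by (meson rtrancl_trans symD)
qed

lemma component_nonempty: "C \<in> components V E \<Longrightarrow> C \<noteq> {}"
  by (auto simp: components_eq component_def)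

lemma reachable_edge_leaving:
  assumes "(x, y) \<in> E\<^sup>*" "x \<in> S" "y \<notin> S"
  obtains u v where "(u, v) \<in> E" "u \<in> S" "v \<notin> S"
  using assms by (induction rule: rtrancl_induct) auto

section \<open>Building 1-perfect orientations\<close>

text \<open>Orient each edge \<open>w w'\<close> towards \<open>w'\<close> if \<open>w' \<in> K w\<close>; edges allowed in both directions
  are oriented along an injective numbering of the vertices.\<close>
lemma one_perfectly_orientable_if_clique_cover:
  assumes graph: "graph V E"
    and clique: "\<And>w. w \<in> V \<Longrightarrow> clique E (K w)"
    and cover: "\<And>w w'. (w, w') \<in> E \<Longrightarrow> w' \<in> K w \<or> w \<in> K w'"
  shows "one_perfectly_orientable V E"
proof -
  obtain f :: "'a \<Rightarrow> nat" where f: "inj_on f V"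
    using finite_imp_inj_to_nat_seg[OF graphD(1)[OF graph]] by blast
  define D where "D = {(w, w'). (w, w') \<in> E \<and> w' \<in> K w \<and> (w \<in> K w' \<longrightarrow> f w < f w')}"
  have "orientation E D"
    unfolding orientation_def
  proof (intro conjI allI impI)
    fix u v assume uv: "(u, v) \<in> E"
    then have "f u \<noteq> f v"
      using f graphD[OF graph] by (metis inj_onD)
    then show "(u, v) \<in> D \<or> (v, u) \<in> D"
      using uv cover[OF uv] graphD(5)[OF graph uv] by (auto simp: D_def)
  qed (auto simp: D_def)
  moreover have "clique E {w. (v, w) \<in> D}" if "v \<in> V" for v
    using clique[OF that] by (rule clique_subset) (auto simp: D_def)
  ultimately show ?thesis
    unfolding one_perfectly_orientable_def one_perfect_orientation_def by blast
qed

lemma one_perfectly_orientable_if_parts: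
  assumes disjoint: "pairwise disjnt P"
    and edge: "\<And>u v. (u, v) \<in> E \<Longrightarrow> \<exists>C\<in>P. u \<in> C \<and> v \<in> C"
    and parts: "\<And>C. C \<in> P \<Longrightarrow> one_perfectly_orientable C (induced_edges E C)"
  shows "one_perfectly_orientable V E"
proof -
  obtain D where D: "\<And>C. C \<in> P \<Longrightarrow> one_perfect_orientation C (induced_edges E C) (D C)"
    using parts unfolding one_perfectly_orientable_def by metis
  have D_sub: "D C \<subseteq> E \<inter> (C \<times> C)" if "C \<in> P" for C
    using D[OF that] by (auto simp: one_perfect_orientation_def orientation_def induced_edges_def)
  have same_part: "C' = C" if "C \<in> P" "C' \<in> P" "x \<in> C" "x \<in> C'" for C C' x
    using disjoint that by (auto simp: pairwise_def disjnt_def)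
  define DD where "DD = (\<Union>C\<in>P. D C)"
  have DD_part: "(v, w) \<in> D C" if "(v, w) \<in> DD" "C \<in> P" "v \<in> C" for v w C
    using that D_sub same_part unfolding DD_def by blast
  have "orientation E DD"
    unfolding orientation_def
  proof (intro conjI allI impI)
    show "DD \<subseteq> E" using D_sub by (auto simp: DD_def)
  next
    fix u v assume "(u, v) \<in> E"
    with edge obtain C where "C \<in> P" "(u, v) \<in> induced_edges E C"
      by (auto simp: induced_edges_def)
    then have "(u, v) \<in> D C \<or> (v, u) \<in> D C"
      using D by (auto simp: one_perfect_orientation_def orientation_def)
    then show "(u, v) \<in> DD \<or> (v, u) \<in> DD"
      using \<open>C \<in> P\<close> by (auto simp: DD_def)
  next
    fix u v assume "(u, v) \<in> DD"
    then obtain C where C: "C \<in> P" "(u, v) \<in> D C" by (auto simp: DD_def)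
    then have "v \<in> C" using D_sub by blast
    then show "(v, u) \<notin> DD"
      using C D DD_part by (auto simp: one_perfect_orientation_def orientation_def)
  qed
  moreover have "clique E {w. (v, w) \<in> DD}" for v
    unfolding clique_def
  proof (intro ballI impI)
    fix a b assume "a \<in> {w. (v, w) \<in> DD}" "b \<in> {w. (v, w) \<in> DD}" "a \<noteq> b"
    then obtain C where "C \<in> P" "v \<in> C" "(v, a) \<in> D C" "(v, b) \<in> D C"
      using D_sub DD_part by (auto simp: DD_def)
    then have "(a, b) \<in> induced_edges E C"
      using D \<open>a \<noteq> b\<close> by (auto simp: one_perfect_orientation_def clique_def)
    then show "(a, b) \<in> E" by (simp add: induced_edges_def)
  qed
  ultimately show ?thesis
    unfolding one_perfectly_orientable_def one_perfect_orientation_def by blast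
qed

section \<open>Strong products\<close>

lemma strong_product_edges_iff:
  "((u, v), (u', v')) \<in> strong_product_edges V1 E1 V2 E2 \<longleftrightarrow>
     u \<in> V1 \<and> u' \<in> V1 \<and> v \<in> V2 \<and> v' \<in> V2 \<and> (u, v) \<noteq> (u', v')
     \<and> u' \<in> closed_nbhd E1 u \<and> v' \<in> closed_nbhd E2 v"
  by (auto simp: strong_product_edges_def closed_nbhd_iff)

lemma graph_strong_product:
  "graph V1 E1 \<Longrightarrow> graph V2 E2 \<Longrightarrow> graph (V1 \<times> V2) (strong_product_edges V1 E1 V2 E2)"
  unfolding graph_def sym_def strong_product_edges_def by auto

lemma clique_strong_product:
  assumes "K1 \<subseteq> V1" "K2 \<subseteq> V2" "clique E1 K1" "clique E2 K2"
  shows "clique (strong_product_edges V1 E1 V2 E2) (K1 \<times> K2)"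
  using assms by (auto simp: clique_def strong_product_edges_def)

lemma induced_edges_strong_product:
  assumes "C1 \<subseteq> V1" "C2 \<subseteq> V2"
  shows "induced_edges (strong_product_edges V1 E1 V2 E2) (C1 \<times> C2)
    = strong_product_edges C1 (induced_edges E1 C1) C2 (induced_edges E2 C2)"
  using assms by (auto simp: induced_edges_def strong_product_edges_def)

lemma one_perfect_orientation_vimage:
  assumes inj: "inj f" and edges: "\<And>x y. (f x, f y) \<in> E \<longleftrightarrow> (x, y) \<in> E'"
    and "f ` V' \<subseteq> V" and D: "one_perfect_orientation V E D"
  shows "one_perfect_orientation V' E' {(x, y). (f x, f y) \<in> D}"
proof -
  have "orientation E' {(x, y). (f x, f y) \<in> D}"
    using D edges unfolding one_perfect_orientation_def orientation_def by blast
  moreover have "clique E' {y. (v, y) \<in> {(x, y). (f x, f y) \<in> D}}" if "v \<in> V'" for v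
  proof -
    have "clique E {w. (f v, w) \<in> D}"
      using D \<open>f ` V' \<subseteq> V\<close> that by (auto simp: one_perfect_orientation_def)
    then show ?thesis
      using inj by (auto simp: clique_def inj_eq simp flip: edges)
  qed
  ultimately show ?thesis
    unfolding one_perfect_orientation_def by blast
qed

lemma strong_product_edges_swap:
  "(prod.swap w, prod.swap w') \<in> strong_product_edges V1 E1 V2 E2
     \<longleftrightarrow> (w, w') \<in> strong_product_edges V2 E2 V1 E1"
  by (cases w; cases w') (auto simp: strong_product_edges_def)

lemma one_perfect_orientation_strong_product_swap:
  "one_perfect_orientation (V1 \<times> V2) (strong_product_edges V1 E1 V2 E2) D \<Longrightarrow>
   one_perfect_orientation (V2 \<times> V1) (strong_product_edges V2 E2 V1 E1)
     {(w, w'). (prod.swap w, prod.swap w') \<in> D}"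
  by (rule one_perfect_orientation_vimage) (auto simp: strong_product_edges_swap)

lemma one_perfectly_orientable_strong_product_swap:
  "one_perfectly_orientable (V1 \<times> V2) (strong_product_edges V1 E1 V2 E2) \<Longrightarrow>
   one_perfectly_orientable (V2 \<times> V1) (strong_product_edges V2 E2 V1 E1)"
  unfolding one_perfectly_orientable_def using one_perfect_orientation_strong_product_swap by blast

lemma clique_closed_nbhd_if_components_complete:
  assumes "graph V E" "\<forall>C\<in>components V E. complete_graph C (induced_edges E C)" "g \<in> V"
  shows "clique E (closed_nbhd E g)"
proof -
  have "closed_nbhd E g \<subseteq> component V E g"
    using closed_nbhd_subset[OF assms(1,3)] by (auto simp: component_def closed_nbhd_iff)
  moreover have "clique (induced_edges E (component V E g)) (component V E g)"
    using assms(2) component_in_components[OF assms(3)] by (auto simp: complete_graph_def)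
  ultimately show ?thesis
    by (auto simp: clique_def induced_edges_def)
qed

lemma clique_closed_out_nbhd:
  assumes "graph V E" "one_perfect_orientation V E D" "v \<in> V"
  shows "clique E (insert v {w. (v, w) \<in> D})"
  using assms graphD(5)[OF assms(1)]
  by (auto simp: clique_def one_perfect_orientation_def orientation_def)

lemma one_perfectly_orientable_complete_components_times:
  assumes G: "graph VG EG" and H: "graph VH EH"
    and complete: "\<forall>C\<in>components VG EG. complete_graph C (induced_edges EG C)"
    and "one_perfectly_orientable VH EH"
  shows "one_perfectly_orientable (VG \<times> VH) (strong_product_edges VG EG VH EH)"
proof -
  obtain D where D: "one_perfect_orientation VH EH D"
    using assms(4) unfolding one_perfectly_orientable_def by blast
  define K where "K = (\<lambda>(g, h). closed_nbhd EG g \<times> insert h {h'. (h, h') \<in> D})"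
  show ?thesis
  proof (rule one_perfectly_orientable_if_clique_cover[where K = K])
    show "graph (VG \<times> VH) (strong_product_edges VG EG VH EH)"
      using G H by (rule graph_strong_product)
  next
    fix w assume "w \<in> VG \<times> VH"
    then obtain g h where w: "w = (g, h)" "g \<in> VG" "h \<in> VH" by blast
    have "insert h {h'. (h, h') \<in> D} \<subseteq> VH"
      using D graphD(7)[OF H] w(3) by (auto simp: one_perfect_orientation_def orientation_def)
    then show "clique (strong_product_edges VG EG VH EH) (K w)"
      unfolding K_def w(1) split
      using clique_closed_nbhd_if_components_complete[OF G complete w(2)]
        clique_closed_out_nbhd[OF H D w(3)] closed_nbhd_subset[OF G w(2)]
      by (intro clique_strong_product)
  next
    fix w w' assume "(w, w') \<in> strong_product_edges VG EG VH EH"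
    then show "w' \<in> K w \<or> w \<in> K w'"
      using D closed_nbhd_sym[OF G]
      by (cases w; cases w')
        (auto simp: K_def strong_product_edges_iff closed_nbhd_iff one_perfect_orientation_def orientation_def)
  qed
qed

section \<open>Co-chain graphs\<close>

lemma sorted_list_of_nested_sets:
  assumes "finite X" and finite: "\<And>x. x \<in> X \<Longrightarrow> finite (N x)"
    and nested: "\<And>x x'. x \<in> X \<Longrightarrow> x' \<in> X \<Longrightarrow> N x \<subseteq> N x' \<or> N x' \<subseteq> N x"
  obtains xs where "distinct xs" "set xs = X"
    "\<And>i j. i < j \<Longrightarrow> j < length xs \<Longrightarrow> N (xs ! i) \<subseteq> N (xs ! j)"
proof -
  obtain xs0 where xs0: "distinct xs0" "set xs0 = X"
    using finite_distinct_list[OF \<open>finite X\<close>] by blast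
  define xs where "xs = sort_key (\<lambda>x. card (N x)) xs0"
  have xs: "distinct xs" "set xs = X"
    using xs0 by (simp_all add: xs_def)
  have "N (xs ! i) \<subseteq> N (xs ! j)" if ij: "i < j" "j < length xs" for i j
  proof -
    have "card (N (xs ! i)) \<le> card (N (xs ! j))"
      using sorted_sort_key[of "\<lambda>x. card (N x)" xs0] ij unfolding sorted_iff_nth_mono xs_def by auto
    moreover have "xs ! i \<in> X" "xs ! j \<in> X"
      using ij xs by auto
    ultimately show ?thesis
      using nested[of "xs ! i" "xs ! j"] card_seteq[OF finite[of "xs ! i"], of "N (xs ! j)"] by auto
  qed
  then show thesis
    using that xs by blast
qed

text \<open>The ordering of \<open>X\<close> in \<open>co_chain\<close> only expresses that the closed neighbourhoods of
  vertices in \<open>X\<close> form a chain under inclusion.\<close>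
locale co_chain_split =
  fixes V :: "'a set" and E :: "('a \<times> 'a) set" and X Y :: "'a set"
  assumes graph: "graph V E"
    and partition: "X \<union> Y = V" "X \<inter> Y = {}"
    and clique_X: "clique E X" and clique_Y: "clique E Y"
    and nested: "\<And>x x'. x \<in> X \<Longrightarrow> x' \<in> X \<Longrightarrow>
      closed_nbhd E x \<subseteq> closed_nbhd E x' \<or> closed_nbhd E x' \<subseteq> closed_nbhd E x"

lemma co_chain_iff_split:
  assumes "graph V E"
  shows "co_chain V E \<longleftrightarrow> (\<exists>X Y. co_chain_split V E X Y)"
proof
  assume "co_chain V E"
  then obtain X Y xs where XY: "X \<union> Y = V" "X \<inter> Y = {}" "clique E X" "clique E Y" "set xs = X"
    and sorted: "\<And>i j. i < j \<Longrightarrow> j < length xs \<Longrightarrow> closed_nbhd E (xs ! i) \<subseteq> closed_nbhd E (xs ! j)"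
    unfolding co_chain_def by blast
  have "closed_nbhd E x \<subseteq> closed_nbhd E x' \<or> closed_nbhd E x' \<subseteq> closed_nbhd E x"
    if xx': "x \<in> X" "x' \<in> X" for x x'
  proof -
    obtain i where "i < length xs" "x = xs ! i"
      using xx'(1) XY(5) by (auto simp: in_set_conv_nth)
    moreover obtain j where "j < length xs" "x' = xs ! j"
      using xx'(2) XY(5) by (auto simp: in_set_conv_nth)
    ultimately show ?thesis
      using sorted by (cases i j rule: linorder_cases) auto
  qed
  then have "co_chain_split V E X Y"
    using assms XY by (simp add: co_chain_split_def)
  then show "\<exists>X Y. co_chain_split V E X Y" by blast
next
  assume "\<exists>X Y. co_chain_split V E X Y"
  then obtain X Y where XY: "co_chain_split V E X Y" by blast
  have finite: "finite X" "\<And>x. x \<in> X \<Longrightarrow> finite (closed_nbhd E x)"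
    using XY assms closed_nbhd_subset[OF assms] graphD(1)[OF assms]
    by (auto simp: co_chain_split_def intro: finite_subset)
  obtain xs where "distinct xs" "set xs = X"
    "\<And>i j. i < j \<Longrightarrow> j < length xs \<Longrightarrow> closed_nbhd E (xs ! i) \<subseteq> closed_nbhd E (xs ! j)"
    using sorted_list_of_nested_sets[of X "closed_nbhd E", OF finite co_chain_split.nested[OF XY]] by blast
  then show "co_chain V E"
    unfolding co_chain_def using co_chain_split.partition[OF XY]
      co_chain_split.clique_X[OF XY] co_chain_split.clique_Y[OF XY]
    by (intro exI[of _ X] exI[of _ Y] exI[of _ xs]) auto
qed

context co_chain_split
begin

lemma in_V: "x \<in> X \<Longrightarrow> x \<in> V" "y \<in> Y \<Longrightarrow> y \<in> V"
  using partition by auto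

lemma down_comparable:
  assumes "y \<in> Y" "y' \<in> Y" "y' \<in> closed_nbhd E y"
  shows "X \<inter> closed_nbhd E y \<subseteq> closed_nbhd E y' \<or> X \<inter> closed_nbhd E y' \<subseteq> closed_nbhd E y"
proof (rule ccontr)
  assume "\<not> ?thesis"
  then obtain x1 x2 where x1: "x1 \<in> X" "x1 \<in> closed_nbhd E y" "x1 \<notin> closed_nbhd E y'"
    and x2: "x2 \<in> X" "x2 \<in> closed_nbhd E y'" "x2 \<notin> closed_nbhd E y"
    by blast
  have "y \<in> closed_nbhd E x1" "y \<notin> closed_nbhd E x2" "y' \<in> closed_nbhd E x2" "y' \<notin> closed_nbhd E x1"
    using x1 x2 closed_nbhd_sym[OF graph] by blast+
  then show False
    using nested[OF x1(1) x2(1)] by blast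
qed

text \<open>The maps below are clique covers of the graph, i.e. closed out-neighbourhoods of 1-perfect
  orientations.\<close>
definition up :: "'a \<Rightarrow> 'a set" where
  "up x = {x' \<in> X. closed_nbhd E x \<subseteq> closed_nbhd E x'} \<union> (Y \<inter> closed_nbhd E x)"

definition down :: "'a \<Rightarrow> 'a set" where
  "down y = (X \<inter> closed_nbhd E y) \<union> {y' \<in> Y \<inter> closed_nbhd E y. X \<inter> closed_nbhd E y \<subseteq> closed_nbhd E y'}"

definition out_mid :: "'a \<Rightarrow> 'a set" where
  "out_mid h = (if h \<in> X then up h else down h)"

definition out_A :: "'a \<Rightarrow> 'a set" where
  "out_A h = (if h \<in> X then up h else Y \<inter> closed_nbhd E h)"

definition out_B :: "'a \<Rightarrow> 'a set" where
  "out_B h = (if h \<in> X then X \<inter> closed_nbhd E h else down h)"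

lemma clique_up: "x \<in> X \<Longrightarrow> clique E (up x)"
  unfolding up_def
  using clique_X clique_Y graphD(3)[OF graph]
  by (intro clique_Un) (auto simp: closed_nbhd_iff intro: clique_subset dest: cliqueD)

lemma clique_down: "y \<in> Y \<Longrightarrow> clique E (down y)"
  unfolding down_def
proof (intro clique_Un)
  fix x y' assume "x \<in> X \<inter> closed_nbhd E y" "y' \<in> {y' \<in> Y \<inter> closed_nbhd E y. X \<inter> closed_nbhd E y \<subseteq> closed_nbhd E y'}"
    "x \<noteq> y'"
  then have "x \<in> closed_nbhd E y'" by blast
  then show "(x, y') \<in> E"
    using \<open>x \<noteq> y'\<close> graphD(5)[OF graph] by (auto simp: closed_nbhd_iff)
qed (use clique_X clique_Y graphD(3)[OF graph] in \<open>auto intro: clique_subset\<close>)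

lemma clique_out:
  assumes "h \<in> V"
  shows "clique E (out_mid h)" "clique E (out_A h)" "clique E (out_B h)"
  using assms partition clique_up clique_down clique_X clique_Y
  by (auto simp: out_mid_def out_A_def out_B_def intro: clique_subset)

lemma out_subset: "out_mid h \<subseteq> V" "out_A h \<subseteq> V" "out_B h \<subseteq> V"
  using partition by (auto simp: out_mid_def out_A_def out_B_def up_def down_def)

lemma out_A_or_up:
  assumes "h \<in> V" "h' \<in> V" "h' \<in> closed_nbhd E h"
  shows "h' \<in> out_A h \<or> (h' \<in> X \<and> h \<in> up h')"
  using assms partition nested closed_nbhd_sym[OF graph]
  by (auto simp: out_A_def up_def)

lemma out_B_or_down:
  assumes "h \<in> V" "h' \<in> V" "h' \<in> closed_nbhd E h"
  shows "h' \<in> out_B h \<or> (h' \<in> Y \<and> h \<in> down h')"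
  using assms partition down_comparable closed_nbhd_sym[OF graph]
  by (auto simp: out_B_def down_def closed_nbhd_iff)

lemma out_eq: "h \<in> X \<Longrightarrow> out_A h = up h" "h \<in> X \<Longrightarrow> out_mid h = up h"
  "h \<in> Y \<Longrightarrow> out_B h = down h" "h \<in> Y \<Longrightarrow> out_mid h = down h"
  using partition by (auto simp: out_A_def out_B_def out_mid_def)

text \<open>For a 2-complete graph with cliques \<open>A\<close> and \<open>B\<close>, a vertex only in \<open>A\<close> is combined with
  \<open>out_A\<close>, one only in \<open>B\<close> with \<open>out_B\<close>, and one in both with \<open>out_mid\<close>, using the clique \<open>A\<close>
  over \<open>X\<close> and \<open>B\<close> over \<open>Y\<close>.\<close>
lemma one_perfectly_orientable_two_complete_times:
  assumes G: "graph VG EG" and "two_complete VG EG"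
  shows "one_perfectly_orientable (VG \<times> V) (strong_product_edges VG EG V E)"
proof -
  obtain A B where AB: "A \<union> B = VG"
    and edge: "\<And>x y. (x, y) \<in> EG \<longleftrightarrow> x \<noteq> y \<and> (x \<in> A \<and> y \<in> A \<or> x \<in> B \<and> y \<in> B)"
    using assms(2) unfolding two_complete_def by blast
  have same_side: "g \<in> A \<and> g' \<in> A \<or> g \<in> B \<and> g' \<in> B" if "g \<in> VG" "g' \<in> closed_nbhd EG g" for g g'
    using that AB edge by (auto simp: closed_nbhd_iff)
  define KG where "KG g h = (if g \<in> A \<and> (g \<notin> B \<or> h \<in> X) then A else B)" for g h
  define KH where "KH g h = (if g \<notin> B then out_A h else if g \<notin> A then out_B h else out_mid h)" for g h
  show ?thesis
  proof (rule one_perfectly_orientable_if_clique_cover[where K = "\<lambda>(g, h). KG g h \<times> KH g h"])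
    show "graph (VG \<times> V) (strong_product_edges VG EG V E)"
      using G graph by (rule graph_strong_product)
  next
    fix w assume "w \<in> VG \<times> V"
    then obtain g h where w: "w = (g, h)" "h \<in> V" by blast
    have "KG g h \<subseteq> VG" "clique EG (KG g h)"
      using AB edge by (auto simp: KG_def clique_def)
    moreover have "KH g h \<subseteq> V" "clique E (KH g h)"
      using out_subset clique_out[OF w(2)] by (simp_all add: KH_def)
    ultimately show "clique (strong_product_edges VG EG V E) (case w of (g, h) \<Rightarrow> KG g h \<times> KH g h)"
      by (simp add: w clique_strong_product)
  next
    fix w w' assume "(w, w') \<in> strong_product_edges VG EG V E"
    then obtain g h g' h' where ww': "w = (g, h)" "w' = (g', h')" "g \<in> VG" "h \<in> V" "h' \<in> V"
      "g' \<in> closed_nbhd EG g" "h' \<in> closed_nbhd E h" "h \<in> closed_nbhd E h'"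
      using closed_nbhd_sym[OF graph] by (cases w; cases w') (auto simp: strong_product_edges_iff)
    show "w' \<in> (case w of (g, h) \<Rightarrow> KG g h \<times> KH g h) \<or> w \<in> (case w' of (g, h) \<Rightarrow> KG g h \<times> KH g h)"
      using same_side[OF ww'(3,6)] out_A_or_up[OF ww'(4,5,7)] out_A_or_up[OF ww'(5,4,8)]
        out_B_or_down[OF ww'(4,5,7)] out_B_or_down[OF ww'(5,4,8)] out_eq ww'(4,5) partition
      unfolding ww'(1,2) KG_def KH_def by (cases "h \<in> X"; cases "h' \<in> X") auto
  qed
qed

end

lemma pairwise_disjnt_times:
  assumes "pairwise disjnt P" "pairwise disjnt Q"
  shows "pairwise disjnt ((\<lambda>(A, B). A \<times> B) ` (P \<times> Q))"
proof (rule pairwiseI)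
  fix S T assume S: "S \<in> (\<lambda>(A, B). A \<times> B) ` (P \<times> Q)" and T: "T \<in> (\<lambda>(A, B). A \<times> B) ` (P \<times> Q)"
    and "S \<noteq> T"
  from S obtain A B where AB: "A \<in> P" "B \<in> Q" "S = A \<times> B" by auto
  from T obtain A' B' where AB': "A' \<in> P" "B' \<in> Q" "T = A' \<times> B'" by auto
  have "disjnt A A' \<or> disjnt B B'"
    using AB AB' \<open>S \<noteq> T\<close> assms by (cases "A = A'") (auto dest: pairwiseD)
  then show "disjnt S T"
    using AB(3) AB'(3) by (auto simp: disjnt_def)
qed

lemma one_perfectly_orientable_two_complete_co_chain_components:
  assumes G: "graph VG EG" and H: "graph VH EH"
    and two_complete: "\<forall>C\<in>components VG EG. two_complete C (induced_edges EG C)"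
    and co_chain: "\<forall>C\<in>components VH EH. co_chain C (induced_edges EH C)"
  shows "one_perfectly_orientable (VG \<times> VH) (strong_product_edges VG EG VH EH)"
proof (rule one_perfectly_orientable_if_parts)
  show "pairwise disjnt ((\<lambda>(C1, C2). C1 \<times> C2) ` (components VG EG \<times> components VH EH))"
    using components_disjoint[OF G] components_disjoint[OF H] by (rule pairwise_disjnt_times)
next
  fix w w' assume "(w, w') \<in> strong_product_edges VG EG VH EH"
  then obtain g h g' h' where "w = (g, h)" "w' = (g', h')" "g \<in> VG" "h \<in> VH"
    "g' \<in> component VG EG g" "h' \<in> component VH EH h"
    by (cases w; cases w') (auto simp: strong_product_edges_iff component_def closed_nbhd_iff)
  moreover have "component VG EG g \<times> component VH EH h
      \<in> (\<lambda>(C1, C2). C1 \<times> C2) ` (components VG EG \<times> components VH EH)"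
    using calculation component_in_components[of g VG EG] component_in_components[of h VH EH]
    by (intro image_eqI[where x = "(component VG EG g, component VH EH h)"]) simp_all
  ultimately show "\<exists>C\<in>(\<lambda>(C1, C2). C1 \<times> C2) ` (components VG EG \<times> components VH EH). w \<in> C \<and> w' \<in> C"
    using component_self[of g VG EG] component_self[of h VH EH] by (intro bexI) auto
next
  fix C assume "C \<in> (\<lambda>(C1, C2). C1 \<times> C2) ` (components VG EG \<times> components VH EH)"
  then obtain C1 C2 where C: "C = C1 \<times> C2" "C1 \<in> components VG EG" "C2 \<in> components VH EH"
    by auto
  have G': "graph C1 (induced_edges EG C1)" and H': "graph C2 (induced_edges EH C2)"
    using graph_induced[OF G component_subset[OF C(2)]] graph_induced[OF H component_subset[OF C(3)]] .
  obtain X Y where "co_chain_split C2 (induced_edges EH C2) X Y"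
    using co_chain C(3) co_chain_iff_split[OF H'] by blast
  then have "one_perfectly_orientable (C1 \<times> C2)
      (strong_product_edges C1 (induced_edges EG C1) C2 (induced_edges EH C2))"
    using two_complete C(2) by (intro co_chain_split.one_perfectly_orientable_two_complete_times[OF _ G']) auto
  then show "one_perfectly_orientable C (induced_edges (strong_product_edges VG EG VH EH) C)"
    using C(1) induced_edges_strong_product[OF component_subset[OF C(2)] component_subset[OF C(3)]]
    by simp
qed

section \<open>Induced paths in components\<close>

lemma components_complete_or_induced_P3:
  assumes G: "graph V E"
  shows "(\<forall>C\<in>components V E. complete_graph C (induced_edges E C)) \<or> (\<exists>x y z. induced_P3 E x y z)"
proof (rule ccontr)
  assume "\<not> ?thesis"
  then obtain C where C: "C \<in> components V E" "\<not> complete_graph C (induced_edges E C)"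
    and no_P3: "\<nexists>x y z. induced_P3 E x y z"
    by blast
  obtain u w where uw: "u \<in> C" "w \<in> C" "u \<noteq> w" "(u, w) \<notin> E"
    using C(2) by (auto simp: complete_graph_def clique_def induced_edges_def)
  have "z \<in> closed_nbhd E u" if "(u, z) \<in> E\<^sup>*" for z
    using that
  proof (induction rule: rtrancl_induct)
    case (step y z)
    then show ?case
      using no_P3 by (auto simp: closed_nbhd_iff induced_P3_def)
  qed (simp add: closed_nbhd_iff)
  then show False
    using component_reachable[OF G C(1) uw(1,2)] uw(3,4) by (auto simp: closed_nbhd_iff)
qed

context co_chain_split
begin

lemma cross_edge_dominating:
  assumes no_P4: "\<nexists>a b c d. induced_P4 E a b c d"
    and "u \<in> X" "v \<in> Y" "(u, v) \<in> E"
  shows "X \<subseteq> closed_nbhd E v \<or> Y \<subseteq> closed_nbhd E u"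
proof (rule ccontr)
  assume "\<not> ?thesis"
  then obtain x y where x: "x \<in> X" "x \<notin> closed_nbhd E v" and y: "y \<in> Y" "y \<notin> closed_nbhd E u"
    by blast
  have "v \<in> closed_nbhd E u" "u \<in> closed_nbhd E v"
    using assms(4) graphD(5)[OF graph] by (auto simp: closed_nbhd_iff)
  then have "\<not> closed_nbhd E u \<subseteq> closed_nbhd E x"
    using x closed_nbhd_sym[OF graph] by blast
  then have "y \<notin> closed_nbhd E x"
    using nested[OF \<open>u \<in> X\<close> x(1)] y(2) by blast
  then have "induced_P4 E y v u x"
    using x y \<open>v \<in> closed_nbhd E u\<close> \<open>u \<in> closed_nbhd E v\<close> assms(2-4) closed_nbhd_sym[OF graph]
      cliqueD[OF clique_X] cliqueD[OF clique_Y]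
    unfolding induced_P4_def closed_nbhd_iff by metis
  then show False
    using no_P4 by blast
qed

lemma two_complete_if_P4_free:
  assumes connected: "\<And>x y. x \<in> V \<Longrightarrow> y \<in> V \<Longrightarrow> (x, y) \<in> E\<^sup>*" and "V \<noteq> {}"
    and no_P4: "\<nexists>a b c d. induced_P4 E a b c d"
  shows "two_complete V E"
proof -
  define A where "A = X \<union> {y \<in> Y. X \<subseteq> closed_nbhd E y}"
  define B where "B = Y \<union> {x \<in> X. Y \<subseteq> closed_nbhd E x}"
  have "A \<union> B = V"
    using partition by (auto simp: A_def B_def)
  moreover have "A \<inter> B \<noteq> {}"
  proof (cases "\<exists>u\<in>X. \<exists>v\<in>Y. (u, v) \<in> E")
    case True
    then obtain u v where "u \<in> X" "v \<in> Y" "(u, v) \<in> E" by blast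
    then have "v \<in> A \<inter> B \<or> u \<in> A \<inter> B"
      using cross_edge_dominating[OF no_P4] by (auto simp: A_def B_def)
    then show ?thesis by blast
  next
    case False
    have "X = {} \<or> Y = {}"
    proof (rule ccontr)
      assume "\<not> ?thesis"
      then obtain x y where "x \<in> X" "y \<in> Y" by blast
      moreover have "y \<notin> X" using \<open>y \<in> Y\<close> partition by blast
      ultimately obtain u v where "(u, v) \<in> E" "u \<in> X" "v \<notin> X"
        using connected[OF in_V] by (metis reachable_edge_leaving)
      then show False
        using False partition graphD(7)[OF graph] by blast
    qed
    then show ?thesis
      using \<open>V \<noteq> {}\<close> partition by (auto simp: A_def B_def)
  qed
  moreover have "(p, q) \<in> E \<longleftrightarrow> p \<noteq> q \<and> (p \<in> A \<and> q \<in> A \<or> p \<in> B \<and> q \<in> B)" for p q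
  proof
    assume pq: "(p, q) \<in> E"
    then have "p \<in> V" "q \<in> V" "p \<noteq> q" "(q, p) \<in> E"
      using graphD[OF graph] by auto
    then show "p \<noteq> q \<and> (p \<in> A \<and> q \<in> A \<or> p \<in> B \<and> q \<in> B)"
      using pq cross_edge_dominating[OF no_P4, of p q] cross_edge_dominating[OF no_P4, of q p] partition
      by (auto simp: A_def B_def)
  next
    assume "p \<noteq> q \<and> (p \<in> A \<and> q \<in> A \<or> p \<in> B \<and> q \<in> B)"
    then show "(p, q) \<in> E"
      using cliqueD[OF clique_X] cliqueD[OF clique_Y] graphD(5)[OF graph]
      by (auto simp: A_def B_def closed_nbhd_iff)
  qed
  ultimately show ?thesis
    unfolding two_complete_def by blast
qed

end

lemma components_two_complete_or_induced_P4:
  assumes G: "graph V E" and co_chain: "\<forall>C\<in>components V E. co_chain C (induced_edges E C)"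
  shows "(\<forall>C\<in>components V E. two_complete C (induced_edges E C)) \<or> (\<exists>a b c d. induced_P4 E a b c d)"
proof (rule ccontr)
  assume "\<not> ?thesis"
  then obtain C where C: "C \<in> components V E" "\<not> two_complete C (induced_edges E C)"
    and no_P4: "\<nexists>a b c d. induced_P4 E a b c d"
    by blast
  have "graph C (induced_edges E C)"
    using graph_induced[OF G component_subset[OF C(1)]] .
  then obtain X Y where "co_chain_split C (induced_edges E C) X Y"
    using co_chain C(1) co_chain_iff_split by blast
  moreover have "\<nexists>a b c d. induced_P4 (induced_edges E C) a b c d"
    using no_P4 by (meson induced_P4_induced_edges)
  ultimately show False
    using co_chain_split.two_complete_if_P4_free component_connected[OF G C(1)]
      component_nonempty[OF C(1)] C(2) by blast
qed

section \<open>Co-chain witnesses\<close>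

text \<open>The second condition says that no induced path or cycle \<open>p g\<^sub>1 g\<^sub>2 q\<close> has both ends
  outside \<open>T\<close>.\<close>
definition co_chain_witness :: "'a set \<Rightarrow> ('a \<times> 'a) set \<Rightarrow> 'a set \<Rightarrow> bool" where
  "co_chain_witness V E T \<longleftrightarrow> (\<forall>g\<in>V. clique E (closed_nbhd E g - T)) \<and>
     (\<forall>g1 g2 p q. (g1, g2) \<in> E \<longrightarrow> (p, g1) \<in> E \<longrightarrow> (g2, q) \<in> E \<longrightarrow> p \<notin> T \<longrightarrow> q \<notin> T
        \<longrightarrow> p \<in> closed_nbhd E g2 \<or> q \<in> closed_nbhd E g1)"

lemma co_chain_witness_clique:
  assumes "co_chain_witness V E T" "g \<in> V" "p \<in> closed_nbhd E g" "q \<in> closed_nbhd E g" "p \<notin> T" "q \<notin> T"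
  shows "q \<in> closed_nbhd E p"
proof (cases "p = q")
  case False
  have "clique E (closed_nbhd E g - T)"
    using assms(1,2) by (simp add: co_chain_witness_def)
  then have "(p, q) \<in> E"
    using False assms(3-6) by (simp add: clique_def)
  then show ?thesis by (simp add: closed_nbhd_iff)
qed (simp add: closed_nbhd_iff)

lemma co_chain_witness_no_P4:
  assumes "co_chain_witness V E T" "(g1, g2) \<in> E" "(p, g1) \<in> E" "(g2, q) \<in> E" "p \<notin> T" "q \<notin> T"
  shows "p \<in> closed_nbhd E g2 \<or> q \<in> closed_nbhd E g1"
  using assms(1)[unfolded co_chain_witness_def, THEN conjunct2, rule_format, OF assms(2-6)] .

lemma relpow_prepend_closed_nbhd:
  assumes "w \<in> closed_nbhd E p" "(w, q) \<in> E ^^ k"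
  shows "\<exists>m \<le> Suc k. (p, q) \<in> E ^^ m"
proof (cases "w = p")
  case True
  then show ?thesis using assms(2) by (intro exI[of _ k]) simp
next
  case False
  then have "(p, w) \<in> E"
    using assms(1) by (simp add: closed_nbhd_iff)
  then have "(p, q) \<in> E ^^ Suc k"
    using assms(2) by (rule relpow_Suc_I2)
  then show ?thesis by (intro exI[of _ "Suc k"]) simp
qed

lemma relpow_Suc_first:
  assumes "(x, y) \<in> E ^^ n" "x \<noteq> y"
  obtains k z where "n = Suc k" "(x, z) \<in> E" "(z, y) \<in> E ^^ k"
proof (cases n)
  case 0
  then show ?thesis using assms by simp
next
  case (Suc k)
  then obtain z where "(x, z) \<in> E" "(z, y) \<in> E ^^ k"
    using relpow_Suc_D2 assms(1) by metis
  then show ?thesis using that Suc by blast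
qed

lemma co_chain_witness_chord:
  assumes G: "graph V E" and T: "co_chain_witness V E T" and T': "co_chain_witness V E T'"
    and "T \<inter> T' = {}" and "p \<notin> T" "w1 \<in> T"
    and "(p, w1) \<in> E" "(w1, w2) \<in> E" "(w2, w3) \<in> E"
  shows "p \<in> closed_nbhd E w2 \<or> w3 \<in> closed_nbhd E w1"
proof (cases "w3 \<in> T")
  case True
  have "w1 \<in> closed_nbhd E w2" "w3 \<in> closed_nbhd E w2"
    using assms(8,9) graphD(5)[OF G] by (auto simp: closed_nbhd_iff)
  moreover have "w1 \<notin> T'" "w3 \<notin> T'"
    using True \<open>w1 \<in> T\<close> \<open>T \<inter> T' = {}\<close> by blast+
  ultimately show ?thesis
    using co_chain_witness_clique[OF T' graphD(6)[OF G assms(9)]] by blast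
next
  case False
  then show ?thesis
    using co_chain_witness_no_P4[OF T assms(8,7,9) \<open>p \<notin> T\<close>] by blast
qed

text \<open>A shortest path between two vertices outside \<open>T\<close> cannot enter \<open>T\<close>.\<close>
lemma shorter_path_avoiding_witness:
  assumes G: "graph V E" and T: "co_chain_witness V E T" and T': "co_chain_witness V E T'"
    and "T \<inter> T' = {}" and "p \<notin> T" "q \<notin> T"
    and "(p, w1) \<in> E" "w1 \<in> T" "(w1, q) \<in> E ^^ n"
  shows "\<exists>m < Suc n. (p, q) \<in> E ^^ m"
proof -
  obtain k w2 where n: "n = Suc k" and w2: "(w1, w2) \<in> E" "(w2, q) \<in> E ^^ k"
    using relpow_Suc_first[OF assms(9)] assms(6,8) by blast
  have "w2 \<in> closed_nbhd E p \<or> (\<exists>l w3. k = Suc l \<and> w3 \<in> closed_nbhd E w1 \<and> (w3, q) \<in> E ^^ l)"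
  proof (cases "w2 \<in> T")
    case False
    have "p \<in> closed_nbhd E w1" "w2 \<in> closed_nbhd E w1"
      using assms(7) w2(1) graphD(5)[OF G] by (auto simp: closed_nbhd_iff)
    then show ?thesis
      using co_chain_witness_clique[OF T graphD(6)[OF G w2(1)]] False assms(5) by blast
  next
    case True
    then obtain l w3 where w3: "k = Suc l" "(w2, w3) \<in> E" "(w3, q) \<in> E ^^ l"
      using relpow_Suc_first[OF w2(2)] assms(6) by blast
    have "p \<in> closed_nbhd E w2 \<or> w3 \<in> closed_nbhd E w1"
      using co_chain_witness_chord[OF G T T' assms(4,5,8,7) w2(1) w3(2)] .
    then show ?thesis
      using w3 closed_nbhd_sym[OF G, of p w2] by blast
  qed
  then show ?thesis
  proof
    assume "w2 \<in> closed_nbhd E p"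
    then obtain m where "m \<le> Suc k" "(p, q) \<in> E ^^ m"
      using relpow_prepend_closed_nbhd[OF _ w2(2)] by blast
    then show ?thesis
      using n by (intro exI[of _ m]) auto
  next
    assume "\<exists>l w3. k = Suc l \<and> w3 \<in> closed_nbhd E w1 \<and> (w3, q) \<in> E ^^ l"
    then obtain l w3 where "k = Suc l" "w3 \<in> closed_nbhd E w1" "(w3, q) \<in> E ^^ l"
      by blast
    then obtain m where "m \<le> k" "(w1, q) \<in> E ^^ m"
      using relpow_prepend_closed_nbhd[of w3 E w1 q l] by auto
    moreover have "(p, q) \<in> E ^^ Suc m"
      using assms(7) calculation(2) by (rule relpow_Suc_I2)
    ultimately show ?thesis
      using n by (intro exI[of _ "Suc m"]) auto
  qed
qed

lemma adjacent_if_reachable_avoiding_witness: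
  assumes G: "graph V E" and T: "co_chain_witness V E T" and T': "co_chain_witness V E T'"
    and disjoint: "T \<inter> T' = {}" and "(p, q) \<in> E\<^sup>*" "p \<notin> T" "q \<notin> T"
  shows "q \<in> closed_nbhd E p"
proof -
  obtain n where "(p, q) \<in> E ^^ n"
    using assms(5) rtrancl_power by blast
  then show ?thesis
    using assms(6,7)
  proof (induction n arbitrary: p rule: less_induct)
    case (less n)
    show ?case
    proof (cases "p = q")
      case False
      then obtain k w1 where n: "n = Suc k" and w1: "(p, w1) \<in> E" "(w1, q) \<in> E ^^ k"
        using relpow_Suc_first[OF less.prems(1)] by blast
      show ?thesis
      proof (cases "w1 \<in> T")
        case False
        have "q \<in> closed_nbhd E w1" "p \<in> closed_nbhd E w1"
          using less.IH[of k w1] n False w1 less.prems(3) graphD(5)[OF G] by (auto simp: closed_nbhd_iff)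
        then show ?thesis
          using co_chain_witness_clique[OF T graphD(7)[OF G w1(1)]] less.prems(2,3) by blast
      next
        case True
        then obtain m where "m < n" "(p, q) \<in> E ^^ m"
          using shorter_path_avoiding_witness[OF G T T' disjoint less.prems(2,3) w1(1) True w1(2)] n
          by blast
        then show ?thesis
          using less.IH less.prems(2,3) by blast
      qed
    qed (simp add: closed_nbhd_iff)
  qed
qed

lemma co_chain_components_if_witnesses:
  assumes G: "graph V E" and T: "co_chain_witness V E T" and T': "co_chain_witness V E T'"
    and disjoint: "T \<inter> T' = {}" and C: "C \<in> components V E"
  shows "co_chain C (induced_edges E C)"
proof -
  have adjacent_T: "y \<in> closed_nbhd E x" if "x \<in> C" "y \<in> C" "x \<notin> T" "y \<notin> T" for x y
    using adjacent_if_reachable_avoiding_witness[OF G T T' disjoint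
        component_reachable[OF G C that(1,2)] that(3,4)] .
  have adjacent_T': "y \<in> closed_nbhd E x" if "x \<in> C" "y \<in> C" "x \<notin> T'" "y \<notin> T'" for x y
    using adjacent_if_reachable_avoiding_witness[OF G T' T _
        component_reachable[OF G C that(1,2)] that(3,4)] disjoint by blast
  have "closed_nbhd E x \<subseteq> closed_nbhd E x' \<or> closed_nbhd E x' \<subseteq> closed_nbhd E x"
    if x: "x \<in> C \<inter> T" "x' \<in> C \<inter> T" for x x'
  proof (rule ccontr)
    assume "\<not> ?thesis"
    then obtain y y' where y: "y \<in> closed_nbhd E x" "y \<notin> closed_nbhd E x'"
      and y': "y' \<in> closed_nbhd E x'" "y' \<notin> closed_nbhd E x" by blast
    have T_neighbour: "z \<in> closed_nbhd E w"
      if "z \<in> closed_nbhd E v" "z \<in> T" "v \<in> C \<inter> T" "w \<in> C \<inter> T" for z v w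
    proof -
      have "z \<in> C"
        using that(1,3) component_closed[OF G C, of v z] by (auto simp: closed_nbhd_iff)
      then show ?thesis
        using adjacent_T'[of w z] that(2,4) disjoint by blast
    qed
    have outside: "y \<notin> T" "y' \<notin> T" and "x \<noteq> x'"
      using T_neighbour[OF y(1) _ x] T_neighbour[OF y'(1) _ x(2,1)] y y' by auto
    moreover have "x' \<in> closed_nbhd E x"
      using adjacent_T'[of x x'] x disjoint by blast
    ultimately have "(x, x') \<in> E" "(y, x) \<in> E" "(x', y') \<in> E"
      using y y' closed_nbhd_sym[OF G] graphD(5)[OF G] by (auto simp: closed_nbhd_iff)
    then show False
      using co_chain_witness_no_P4[OF T _ _ _ outside] y(2) y'(2) by blast
  qed
  moreover have "clique (induced_edges E C) (C \<inter> T)" "clique (induced_edges E C) (C - T)"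
    using adjacent_T adjacent_T' disjoint
    unfolding clique_def induced_edges_def closed_nbhd_iff by blast+
  ultimately have "co_chain_split C (induced_edges E C) (C \<inter> T) (C - T)"
    unfolding co_chain_split_def
    using graph_induced[OF G component_subset[OF C]] closed_nbhd_induced_component[OF G C] by auto
  then show ?thesis
    using co_chain_iff_split[OF graph_induced[OF G component_subset[OF C]]] by blast
qed

section \<open>1-perfect orientations of strong products\<close>

locale oriented_strong_product =
  fixes VG :: "'a set" and EG :: "('a \<times> 'a) set" and VH :: "'b set" and EH :: "('b \<times> 'b) set"
    and D :: "(('a \<times> 'b) \<times> ('a \<times> 'b)) set"
  assumes graph_G: "graph VG EG" and graph_H: "graph VH EH"
    and orientation: "one_perfect_orientation (VG \<times> VH) (strong_product_edges VG EG VH EH) D"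
begin

abbreviation EP where "EP \<equiv> strong_product_edges VG EG VH EH"

lemma arc_edge: "(w, w') \<in> D \<Longrightarrow> (w, w') \<in> EP"
  using orientation unfolding one_perfect_orientation_def orientation_def by blast

lemma arc_total: "(w, w') \<in> EP \<Longrightarrow> (w, w') \<in> D \<or> (w', w) \<in> D"
  using orientation unfolding one_perfect_orientation_def orientation_def by blast

lemma arc_antisym: "(w, w') \<in> D \<Longrightarrow> (w', w) \<notin> D"
  using orientation unfolding one_perfect_orientation_def orientation_def by blast

lemma arc_clique:
  assumes "(w, a) \<in> D" "(w, b) \<in> D" "a \<noteq> b"
  shows "(a, b) \<in> EP"
proof -
  have "w \<in> VG \<times> VH"
    using arc_edge[OF assms(1)] graphD(6)[OF graph_strong_product[OF graph_G graph_H]] by blast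
  then have "clique EP {w'. (w, w') \<in> D}"
    using orientation unfolding one_perfect_orientation_def by blast
  then show ?thesis
    using assms unfolding clique_def by blast
qed

text \<open>The out-neighbourhood of \<open>b\<close> is a clique, so \<open>c\<close> cannot be one of its out-neighbours.\<close>
lemma arc_forced: "(b, a) \<in> D \<Longrightarrow> (b, c) \<in> EP \<Longrightarrow> (a, c) \<notin> EP \<Longrightarrow> a \<noteq> c \<Longrightarrow> (c, b) \<in> D"
  using arc_total arc_clique by blast

lemma one_perfectly_orientable_factor:
  assumes "g \<in> VG"
  shows "one_perfectly_orientable VH EH"
proof -
  have "one_perfect_orientation VH EH {(x, y). ((g, x), (g, y)) \<in> D}"
    using assms graphD[OF graph_H]
    by (intro one_perfect_orientation_vimage[OF _ _ _ orientation])
      (auto simp: inj_def strong_product_edges_iff closed_nbhd_iff)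
  then show ?thesis
    unfolding one_perfectly_orientable_def by blast
qed

definition into_layer :: "'b \<Rightarrow> 'b \<Rightarrow> 'a set" where
  "into_layer i j = {g \<in> VG. \<exists>g'. ((g, j), (g', i)) \<in> D}"

lemma arc_from_layer:
  assumes "(i, j) \<in> EH" "g \<in> VG" "g \<notin> into_layer i j" "g' \<in> closed_nbhd EG g"
  shows "((g', i), (g, j)) \<in> D"
proof -
  have "((g, j), (g', i)) \<in> EP"
    using assms graphD[OF graph_H] closed_nbhd_subset[OF graph_G assms(2)]
    by (auto simp: strong_product_edges_iff closed_nbhd_iff)
  then show ?thesis
    using arc_total assms(2,3) unfolding into_layer_def by blast
qed

lemma clique_closed_nbhd_minus_into_layer:
  assumes ij: "(i, j) \<in> EH" and "g \<in> VG"
  shows "clique EG (closed_nbhd EG g - into_layer i j)"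
  unfolding clique_def
proof (intro ballI impI)
  fix p q assume "p \<in> closed_nbhd EG g - into_layer i j" "q \<in> closed_nbhd EG g - into_layer i j" "p \<noteq> q"
  moreover have "p \<in> VG" "q \<in> VG"
    using calculation closed_nbhd_subset[OF graph_G \<open>g \<in> VG\<close>] by blast+
  ultimately have "((p, j), (q, j)) \<in> EP"
    using arc_clique arc_from_layer[OF ij] closed_nbhd_sym[OF graph_G] by blast
  then show "(p, q) \<in> EG"
    using \<open>p \<noteq> q\<close> by (auto simp: strong_product_edges_iff closed_nbhd_iff)
qed

lemma chord_outside_into_layer:
  assumes ij: "(i, j) \<in> EH"
    and g: "(g1, g2) \<in> EG" "(p, g1) \<in> EG" "(g2, q) \<in> EG" and pq: "p \<notin> into_layer i j" "q \<notin> into_layer i j"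
  shows "p \<in> closed_nbhd EG g2 \<or> q \<in> closed_nbhd EG g1"
proof -
  have "i \<noteq> j" "i \<in> VH"
    using ij graphD[OF graph_H] by blast+
  have arcs: "((g1, i), (p, j)) \<in> D" "((g2, i), (q, j)) \<in> D"
    using arc_from_layer[OF ij _ pq(1)] arc_from_layer[OF ij _ pq(2)] g graphD[OF graph_G]
    by (auto simp: closed_nbhd_iff)
  have "((g1, i), (g2, i)) \<in> EP"
    using g(1) \<open>i \<in> VH\<close> graphD[OF graph_G] by (auto simp: strong_product_edges_iff closed_nbhd_iff)
  then consider "((g1, i), (g2, i)) \<in> D" | "((g2, i), (g1, i)) \<in> D"
    using arc_total by blast
  then show ?thesis
  proof cases
    case 1
    then have "((g2, i), (p, j)) \<in> EP"
      using arc_clique arcs(1) \<open>i \<noteq> j\<close> by blast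
    then show ?thesis by (simp add: strong_product_edges_iff)
  next
    case 2
    then have "((g1, i), (q, j)) \<in> EP"
      using arc_clique arcs(2) \<open>i \<noteq> j\<close> by blast
    then show ?thesis by (simp add: strong_product_edges_iff)
  qed
qed

lemma co_chain_witness_into_layer: "(i, j) \<in> EH \<Longrightarrow> co_chain_witness VG EG (into_layer i j)"
  unfolding co_chain_witness_def
  using clique_closed_nbhd_minus_into_layer chord_outside_into_layer by blast

lemma into_layer_disjoint:
  assumes "induced_P3 EH i j k"
  shows "into_layer i j \<inter> into_layer k j = {}"
proof (rule ccontr)
  assume "\<not> ?thesis"
  then obtain g g1 g2 where "((g, j), (g1, i)) \<in> D" "((g, j), (g2, k)) \<in> D"
    unfolding into_layer_def by blast
  then have "((g1, i), (g2, k)) \<in> EP"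
    using arc_clique assms by (auto simp: induced_P3_def)
  then show False
    using assms by (auto simp: strong_product_edges_iff closed_nbhd_iff induced_P3_def)
qed

lemma co_chain_components_if_induced_P3:
  assumes "induced_P3 EH i j k"
  shows "\<forall>C\<in>components VG EG. co_chain C (induced_edges EG C)"
  using assms co_chain_components_if_witnesses[OF graph_G co_chain_witness_into_layer
      co_chain_witness_into_layer into_layer_disjoint[OF assms]] graphD(5)[OF graph_H]
  by (auto simp: induced_P3_def)

text \<open>Whichever way the edge between \<open>(a, h\<^sub>2)\<close> and \<open>(b, h\<^sub>1)\<close> is oriented, the forced arcs
  travel around the two paths and come back reversing it.\<close>
lemma no_induced_P4_times_P4:
  assumes "induced_P4 EG a b c d" "induced_P4 EH h1 h2 h3 h4"
  shows False
proof -
  have G: "(a, b) \<in> EG" "(b, c) \<in> EG" "(c, d) \<in> EG" "(b, a) \<in> EG" "(c, b) \<in> EG" "(d, c) \<in> EG"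
    "(a, c) \<notin> EG" "(b, d) \<notin> EG" "(a, d) \<notin> EG" "(c, a) \<notin> EG" "(d, b) \<notin> EG" "(d, a) \<notin> EG"
    "a \<noteq> b" "b \<noteq> c" "c \<noteq> d" "a \<noteq> c" "b \<noteq> d" "a \<noteq> d" "a \<in> VG" "b \<in> VG" "c \<in> VG" "d \<in> VG"
    using assms(1) graphD[OF graph_G] unfolding induced_P4_def by metis+
  have H: "(h1, h2) \<in> EH" "(h2, h3) \<in> EH" "(h3, h4) \<in> EH" "(h2, h1) \<in> EH" "(h3, h2) \<in> EH" "(h4, h3) \<in> EH"
    "(h1, h3) \<notin> EH" "(h2, h4) \<notin> EH" "(h1, h4) \<notin> EH" "(h3, h1) \<notin> EH" "(h4, h2) \<notin> EH" "(h4, h1) \<notin> EH"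
    "h1 \<noteq> h2" "h2 \<noteq> h3" "h3 \<noteq> h4" "h1 \<noteq> h3" "h2 \<noteq> h4" "h1 \<noteq> h4" "h1 \<in> VH" "h2 \<in> VH" "h3 \<in> VH" "h4 \<in> VH"
    using assms(2) graphD[OF graph_H] unfolding induced_P4_def by metis+
  note F = G H G(13-18)[THEN not_sym] H(13-18)[THEN not_sym] strong_product_edges_iff closed_nbhd_iff
  have forward: "((b, h1), (a, h2)) \<in> D" if "((a, h2), (b, h1)) \<in> D"
  proof -
    have "((b, h3), (a, h2)) \<in> D" by (rule arc_forced[OF that]) (simp_all add: F)
    then have "((c, h2), (b, h3)) \<in> D" by (rule arc_forced) (simp_all add: F)
    then have "((d, h3), (c, h2)) \<in> D" by (rule arc_forced) (simp_all add: F)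
    then have "((c, h4), (d, h3)) \<in> D" by (rule arc_forced) (simp_all add: F)
    then have "((b, h3), (c, h4)) \<in> D" by (rule arc_forced) (simp_all add: F)
    then have "((a, h2), (b, h3)) \<in> D" by (rule arc_forced) (simp_all add: F)
    then show ?thesis by (rule arc_forced) (simp_all add: F)
  qed
  have backward: "((a, h2), (b, h1)) \<in> D" if "((b, h1), (a, h2)) \<in> D"
  proof -
    have "((c, h2), (b, h1)) \<in> D" by (rule arc_forced[OF that]) (simp_all add: F)
    then have "((b, h3), (c, h2)) \<in> D" by (rule arc_forced) (simp_all add: F)
    then have "((c, h4), (b, h3)) \<in> D" by (rule arc_forced) (simp_all add: F)
    then have "((d, h3), (c, h4)) \<in> D" by (rule arc_forced) (simp_all add: F)
    then have "((c, h2), (d, h3)) \<in> D" by (rule arc_forced) (simp_all add: F)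
    then have "((b, h1), (c, h2)) \<in> D" by (rule arc_forced) (simp_all add: F)
    then show ?thesis by (rule arc_forced) (simp_all add: F)
  qed
  have "((a, h2), (b, h1)) \<in> EP" by (simp add: F)
  then show False
    using arc_total forward backward arc_antisym by blast
qed

end

lemma one_perfectly_orientable_strong_product_cases:
  assumes G: "graph VG EG" and H: "graph VH EH" and "VG \<noteq> {}" "VH \<noteq> {}"
    and "one_perfectly_orientable (VG \<times> VH) (strong_product_edges VG EG VH EH)"
  shows "((\<forall>C\<in>components VG EG. complete_graph C (induced_edges EG C)) \<and> one_perfectly_orientable VH EH)
    \<or> ((\<forall>C\<in>components VH EH. complete_graph C (induced_edges EH C)) \<and> one_perfectly_orientable VG EG)
    \<or> ((\<forall>C\<in>components VG EG. two_complete C (induced_edges EG C)) \<and>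
       (\<forall>C\<in>components VH EH. co_chain C (induced_edges EH C)))
    \<or> ((\<forall>C\<in>components VH EH. two_complete C (induced_edges EH C)) \<and>
       (\<forall>C\<in>components VG EG. co_chain C (induced_edges EG C)))"
proof -
  obtain D where D: "one_perfect_orientation (VG \<times> VH) (strong_product_edges VG EG VH EH) D"
    using assms(5) unfolding one_perfectly_orientable_def by blast
  interpret GH: oriented_strong_product VG EG VH EH D
    using G H D by unfold_locales
  interpret HG: oriented_strong_product VH EH VG EG "{(w, w'). (prod.swap w, prod.swap w') \<in> D}"
    using G H one_perfect_orientation_strong_product_swap[OF D] by unfold_locales
  have factors: "one_perfectly_orientable VH EH" "one_perfectly_orientable VG EG"
    using GH.one_perfectly_orientable_factor HG.one_perfectly_orientable_factor assms(3,4) by blast+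
  consider
      "\<forall>C\<in>components VG EG. complete_graph C (induced_edges EG C)"
    | "\<forall>C\<in>components VH EH. complete_graph C (induced_edges EH C)"
    | (P3) "\<exists>x y z. induced_P3 EG x y z" "\<exists>x y z. induced_P3 EH x y z"
    using components_complete_or_induced_P3[OF G] components_complete_or_induced_P3[OF H] by blast
  then show ?thesis
  proof cases
    case P3
    then have "\<forall>C\<in>components VG EG. co_chain C (induced_edges EG C)"
      "\<forall>C\<in>components VH EH. co_chain C (induced_edges EH C)"
      using GH.co_chain_components_if_induced_P3 HG.co_chain_components_if_induced_P3 by blast+
    then show ?thesis
      using components_two_complete_or_induced_P4[OF G] components_two_complete_or_induced_P4[OF H]
        GH.no_induced_P4_times_P4 by blast
  qed (use factors in blast)+
qed

theorem theorem22:
  fixes VG :: "'a set" and EG :: "('a \<times> 'a) set"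
    and VH :: "'b set" and EH :: "('b \<times> 'b) set"
  assumes "graph VG EG" and "graph VH EH"
    and "card VG \<ge> 2" and "card VH \<ge> 2"
  shows "one_perfectly_orientable (VG \<times> VH) (strong_product_edges VG EG VH EH) \<longleftrightarrow>
    ((\<forall>C\<in>components VG EG. complete_graph C (induced_edges EG C)) \<and> one_perfectly_orientable VH EH)
    \<or> ((\<forall>C\<in>components VH EH. complete_graph C (induced_edges EH C)) \<and> one_perfectly_orientable VG EG)
    \<or> ((\<forall>C\<in>components VG EG. two_complete C (induced_edges EG C)) \<and>
       (\<forall>C\<in>components VH EH. co_chain C (induced_edges EH C)))
    \<or> ((\<forall>C\<in>components VH EH. two_complete C (induced_edges EH C)) \<and>
       (\<forall>C\<in>components VG EG. co_chain C (induced_edges EG C)))"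
    (is "?product \<longleftrightarrow> ?cases")
proof
  assume ?product
  moreover have "VG \<noteq> {}" "VH \<noteq> {}"
    using assms(3,4) by auto
  ultimately show ?cases
    using one_perfectly_orientable_strong_product_cases[OF assms(1,2)] by blast
next
  assume ?cases
  then show ?product
    using one_perfectly_orientable_complete_components_times[OF assms(1,2)]
      one_perfectly_orientable_complete_components_times[OF assms(2,1)]
      one_perfectly_orientable_two_complete_co_chain_components[OF assms(1,2)]
      one_perfectly_orientable_two_complete_co_chain_components[OF assms(2,1)]
      one_perfectly_orientable_strong_product_swap
    by blast
qed

end
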